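(* Let $n=1$, let $k\ge 2$ be an integer and $p=1/k$. There exist constants $C_k>0$ and $C_k'>0$ such that for every $0<r<2^{1-k}$ and every $c\in[0,1]$ there is a measurable function $a$ on $\mathbb R$ with: $\operatorname{supp} a\subset B_r:=[-2^{k-2}r,2^{k-2}r]$; $\|a\|_{L^\infty}\le (2^{k-2}r)^{-k}=r(B_r)^{-1/p}$; $\int a(t)t^{\ell}dt=0$ for $0\le\ell\le k-2$; $\int a(t)t^{k-1}dt=C_k\,c$; and $$c\,|\log r|\le C_k'\big(1+\|a\|_{h^{1/k}(\mathbb R)}\big).$$ In particular, for $p=1/k$ a uniform bound on the moment of order $N_p=k-1$, together with the support and size conditions of an atom and vanishing lower moments, does not imply a uniform bound on the $h^p$ quasi-norm; a decay of order $O(1/|\log r|)$ of the top moment is necessary for such a uniform bound.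
   Context: Local Hardy space: fix $\phi\in\mathcal S(\mathbb R^n)$ with $\int\phi\neq 0$, put $\phi_t(x)=t^{-n}\phi(x/t)$; for a tempered distribution $f$ let $m_\phi f(x)=\sup_{0<t<1}|f*\phi_t(x)|$ and $\|f\|_{h^p}=\|m_\phi f\|_{L^p(\mathbb R^n)}$; $h^p(\mathbb R^n)$ is the set of $f$ with $\|f\|_{h^p}<\infty$. Here $n=1$, $r(B_r)=2^{k-2}r$ is the radius of $B_r$, and $N_p=\lfloor \gamma_p\rfloor$ with $\gamma_p=1/p-1=k-1$. *)

theory Defs
  imports "HOL-Analysis.Analysis"
begin

fun iter_vderiv :: "(real \<Rightarrow> complex) \<Rightarrow> nat \<Rightarrow> real \<Rightarrow> complex" where
  "iter_vderiv f 0 = f"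
| "iter_vderiv f (Suc m) = (\<lambda>x. vector_derivative (iter_vderiv f m) (at x))"

definition schwartz :: "(real \<Rightarrow> complex) \<Rightarrow> bool" where
  "schwartz f \<longleftrightarrow>
     (\<forall>m x. iter_vderiv f m differentiable (at x)) \<and>
     (\<forall>m j. \<exists>B. \<forall>x. \<bar>x\<bar> ^ j * cmod (iter_vderiv f m x) \<le> B)"

definition dil :: "(real \<Rightarrow> complex) \<Rightarrow> real \<Rightarrow> real \<Rightarrow> complex" where
  "dil \<phi> t x = complex_of_real (1 / t) * \<phi> (x / t)"

definition conv_dil :: "(real \<Rightarrow> real) \<Rightarrow> (real \<Rightarrow> complex) \<Rightarrow> real \<Rightarrow> real \<Rightarrow> complex" where
  "conv_dil f \<phi> t x = (LINT y|lborel. complex_of_real (f y) * dil \<phi> t (x - y))"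

definition loc_max :: "(real \<Rightarrow> complex) \<Rightarrow> (real \<Rightarrow> real) \<Rightarrow> real \<Rightarrow> ennreal" where
  "loc_max \<phi> f x = (SUP t\<in>{0<..<1}. ennreal (cmod (conv_dil f \<phi> t x)))"

definition enn_powr :: "ennreal \<Rightarrow> real \<Rightarrow> ennreal" where
  "enn_powr x q = (if x = top then top else ennreal (enn2real x powr q))"

definition hp_norm :: "(real \<Rightarrow> complex) \<Rightarrow> real \<Rightarrow> (real \<Rightarrow> real) \<Rightarrow> ennreal" where
  "hp_norm \<phi> p f = enn_powr (\<integral>\<^sup>+ x. enn_powr (loc_max \<phi> f x) p \<partial>lborel) (1 / p)"

end

theory Submission
  imports Defs
begin

text \<open>
  The atom is a normalised (k-1)-fold finite difference of the indicator of an interval of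
  length 2R/k, so its moments below k-1 vanish and its moment of order k-1 is proportional to c.
  Fix s \<noteq> 0 where the (k-1)-th derivative of \<phi> does not vanish. Taylor expansion of \<phi>
  around s shows that the convolution of a with the dilate \<phi>_t, evaluated at s t, has size
  about c / t^k as soon as t is a large multiple of R / c. So the k-th root of the maximal
  function is at least a constant times c^(1/k) / t along the ray x = s t, and integrating
  1 / t from a multiple of R / c up to 1/2 produces c |log r| up to constants.
\<close>

definition backward_diff :: "real \<Rightarrow> (real \<Rightarrow> real) \<Rightarrow> real \<Rightarrow> real" where
  "backward_diff h f x = f x - f (x - h)"

definition moment :: "(real \<Rightarrow> real) \<Rightarrow> nat \<Rightarrow> real" where
  "moment f l = (LINT y|lborel. f y * y ^ l)"

lemma backward_diff_pow_Suc:
  "(backward_diff h ^^ Suc m) f x = (backward_diff h ^^ m) f x - (backward_diff h ^^ m) f (x - h)"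
  by (simp add: backward_diff_def)

lemma backward_diff_pow_measurable [measurable]:
  assumes [measurable]: "f \<in> borel_measurable borel"
  shows "(backward_diff h ^^ m) f \<in> borel_measurable borel"
  by (induction m) (simp_all add: backward_diff_def[abs_def])

lemma backward_diff_pow_support:
  assumes "h > 0" and "\<And>x. f x \<noteq> 0 \<Longrightarrow> x \<in> {A..B}"
  shows "(backward_diff h ^^ m) f x \<noteq> 0 \<Longrightarrow> x \<in> {A..B + real m * h}"
proof (induction m arbitrary: x)
  case 0
  then show ?case using assms(2) by simp
next
  case (Suc m)
  then have "(backward_diff h ^^ m) f x \<noteq> 0 \<or> (backward_diff h ^^ m) f (x - h) \<noteq> 0"
    using backward_diff_pow_Suc[of m h f x] by auto
  then show ?case
    using Suc.IH[of x] Suc.IH[of "x - h"] \<open>h > 0\<close> by (auto simp: algebra_simps)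
qed

lemma backward_diff_pow_bound:
  assumes "\<And>x. \<bar>f x\<bar> \<le> K"
  shows "\<bar>(backward_diff h ^^ m) f x\<bar> \<le> 2 ^ m * K"
proof (induction m arbitrary: x)
  case 0
  then show ?case using assms by simp
next
  case (Suc m)
  have "\<bar>(backward_diff h ^^ m) f x - (backward_diff h ^^ m) f (x - h)\<bar> \<le> 2 ^ m * K + 2 ^ m * K"
    using Suc.IH[of x] Suc.IH[of "x - h"] by linarith
  then show ?case unfolding backward_diff_pow_Suc by (simp add: mult_ac)
qed

lemma moment_translate:
  assumes "\<And>l. integrable lborel (\<lambda>y. f y * y ^ l)"
  shows "integrable lborel (\<lambda>y. f (y - h) * y ^ l)"
    and "(LINT y|lborel. f (y - h) * y ^ l) = (\<Sum>i\<le>l. of_nat (l choose i) * h ^ (l - i) * moment f i)"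
proof -
  have binom: "f y * (y + h) ^ l = (\<Sum>i\<le>l. of_nat (l choose i) * h ^ (l - i) * (f y * y ^ i))" for y
    unfolding binomial_ring by (simp add: sum_distrib_left mult_ac)
  have int: "integrable lborel (\<lambda>y. f y * (y + h) ^ l)"
    unfolding binom using assms by (intro Bochner_Integration.integrable_sum integrable_mult_right) auto
  have shift: "(\<lambda>y. f (y - h) * y ^ l) = (\<lambda>y. (\<lambda>y. f y * (y + h) ^ l) (- h + 1 * y))"
    by auto
  show "integrable lborel (\<lambda>y. f (y - h) * y ^ l)"
    unfolding shift by (rule lborel_integrable_real_affine[OF int]) simp
  have "(LINT y|lborel. f (y - h) * y ^ l) = (LINT y|lborel. f y * (y + h) ^ l)"
    using lborel_integral_real_affine[of 1 "\<lambda>y. f (y - h) * y ^ l" h] by (simp add: add.commute)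
  also have "\<dots> = (\<Sum>i\<le>l. of_nat (l choose i) * h ^ (l - i) * moment f i)"
    unfolding binom moment_def using assms by (subst Bochner_Integration.integral_sum) auto
  finally show "(LINT y|lborel. f (y - h) * y ^ l) = \<dots>" .
qed

lemma moment_backward_diff:
  assumes "\<And>l. integrable lborel (\<lambda>y. f y * y ^ l)"
  shows "integrable lborel (\<lambda>y. backward_diff h f y * y ^ l)"
    and "moment (backward_diff h f) l = - (\<Sum>i<l. of_nat (l choose i) * h ^ (l - i) * moment f i)"
proof -
  have split: "(\<lambda>y. backward_diff h f y * y ^ l) = (\<lambda>y. f y * y ^ l - f (y - h) * y ^ l)"
    by (auto simp: backward_diff_def algebra_simps)
  show "integrable lborel (\<lambda>y. backward_diff h f y * y ^ l)"
    unfolding split using assms moment_translate(1)[OF assms] by auto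
  have "moment (backward_diff h f) l = moment f l - (\<Sum>i\<le>l. of_nat (l choose i) * h ^ (l - i) * moment f i)"
    using assms moment_translate[OF assms] by (simp add: moment_def split)
  then show "moment (backward_diff h f) l = - (\<Sum>i<l. of_nat (l choose i) * h ^ (l - i) * moment f i)"
    by (simp add: lessThan_Suc_atMost[symmetric])
qed

lemma moment_backward_diff_pow:
  assumes "\<And>l. integrable lborel (\<lambda>y. f y * y ^ l)"
  shows "(\<forall>l. integrable lborel (\<lambda>y. (backward_diff h ^^ m) f y * y ^ l)) \<and>
    (\<forall>l<m. moment ((backward_diff h ^^ m) f) l = 0) \<and>
    moment ((backward_diff h ^^ m) f) m = (- h) ^ m * fact m * moment f 0"
proof (induction m)
  case 0
  then show ?case using assms by simp
next
  case (Suc m)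
  then have int: "\<And>l. integrable lborel (\<lambda>y. (backward_diff h ^^ m) f y * y ^ l)" by blast
  note step = moment_backward_diff[OF int]
  have "moment ((backward_diff h ^^ Suc m) f) l = 0" if "l < Suc m" for l
    using Suc that step(2)[of h l] by simp
  moreover have "moment ((backward_diff h ^^ Suc m) f) (Suc m) = (- h) ^ Suc m * fact (Suc m) * moment f 0"
    using Suc step(2)[of h "Suc m"] by (simp add: algebra_simps)
  ultimately show ?case using step(1) by simp
qed

lemma integrable_bounded_support_mult:
  fixes f :: "real \<Rightarrow> 'a::{banach,second_countable_topology}"
  assumes [measurable]: "h \<in> borel_measurable borel"
    and supp: "\<And>y. h y \<noteq> 0 \<Longrightarrow> y \<in> {A..B}" and bound: "\<And>y. \<bar>h y\<bar> \<le> K"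
    and f: "continuous_on UNIV f"
  shows "integrable lborel (\<lambda>y. h y *\<^sub>R f y)"
proof (rule Bochner_Integration.integrable_bound)
  show "integrable lborel (\<lambda>y. K * norm (indicator {A..B} y *\<^sub>R f y))"
    using borel_integrable_compact[of "{A..B}" f] continuous_on_subset[OF f]
    by (intro integrable_mult_right integrable_norm) auto
  show "(\<lambda>y. h y *\<^sub>R f y) \<in> borel_measurable lborel"
    using borel_measurable_continuous_onI[OF f] by simp
  have "norm (h y *\<^sub>R f y) \<le> K * norm (indicator {A..B} y *\<^sub>R f y)" for y
    using supp[of y] bound[of y] by (cases "h y = 0") (auto intro: mult_right_mono)
  then show "AE y in lborel. norm (h y *\<^sub>R f y) \<le> norm (K * norm (indicator {A..B} y *\<^sub>R f y))"
    by (auto intro: order_trans[OF _ abs_ge_self])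
qed

text \<open>The sign makes the top moment nonnegative; the factor 2^(k-1) offsets the growth
  of the iterated difference, so that the atom is bounded by R^-k.\<close>
definition diff_atom :: "nat \<Rightarrow> real \<Rightarrow> real \<Rightarrow> real \<Rightarrow> real" where
  "diff_atom k R c y = c * (-1) ^ (k - 1) / (2 ^ (k - 1) * R ^ k) *
     (backward_diff (2 * R / k) ^^ (k - 1)) (indicator {-R..<-R + 2 * R / k}) y"

lemma diff_atom_measurable [measurable]: "diff_atom k R c \<in> borel_measurable borel"
  unfolding diff_atom_def[abs_def] by measurable

lemma diff_atom_support:
  assumes "k \<ge> 1" "R > 0" "diff_atom k R c y \<noteq> 0"
  shows "y \<in> {-R..R}"
proof -
  have "(backward_diff (2 * R / k) ^^ (k - 1)) (indicator {-R..<-R + 2 * R / k}) y \<noteq> 0"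
    using assms(3) by (auto simp: diff_atom_def)
  then have "y \<in> {-R..-R + 2 * R / k + real (k - 1) * (2 * R / k)}"
    using assms by (intro backward_diff_pow_support) (auto simp: indicator_def split: if_splits)
  also have "-R + 2 * R / k + real (k - 1) * (2 * R / k) = R"
    using assms(1) by (simp add: of_nat_diff field_simps)
  finally show ?thesis .
qed

lemma diff_atom_bound:
  assumes "R > 0" "0 \<le> c" "c \<le> 1"
  shows "\<bar>diff_atom k R c y\<bar> \<le> 1 / R ^ k"
proof -
  have diff: "\<bar>(backward_diff (2 * R / k) ^^ (k - 1)) (indicator {-R..<-R + 2 * R / k}) y\<bar> \<le> 2 ^ (k - 1)"
    using backward_diff_pow_bound[of "indicator {-R..<-R + 2 * R / k}" 1] by simp
  have "\<bar>diff_atom k R c y\<bar> = c / R ^ k *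
      (\<bar>(backward_diff (2 * R / k) ^^ (k - 1)) (indicator {-R..<-R + 2 * R / k}) y\<bar> / 2 ^ (k - 1))"
    using assms by (simp add: diff_atom_def abs_mult power_abs)
  also have "\<dots> \<le> 1 / R ^ k * 1"
    using assms diff by (intro mult_mono) (auto simp: divide_le_eq_1 frac_le)
  finally show ?thesis by simp
qed

lemma moment_diff_atom:
  assumes "k \<ge> 1" "R > 0" "l < k"
  shows "moment (diff_atom k R c) l = (if l = k - 1 then 2 * fact (k - 1) / real k ^ k * c else 0)"
proof -
  define h where "h = 2 * R / k"
  define I :: "real \<Rightarrow> real" where "I = indicator {-R..<-R + h}"
  have hpos: "h > 0" using assms unfolding h_def by simp
  have "integrable lborel (\<lambda>y. I y * y ^ l)" for l
    using integrable_bounded_support_mult[of I "-R" "-R + h" 1 "\<lambda>y. y ^ l"] continuous_on_power[OF continuous_on_id]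
    by (auto simp: I_def indicator_def)
  note moments = moment_backward_diff_pow[OF this, where h=h and m="k - 1"]
  have "moment (diff_atom k R c) l = c * (-1) ^ (k - 1) / (2 ^ (k - 1) * R ^ k) * moment ((backward_diff h ^^ (k - 1)) I) l"
    by (simp add: moment_def diff_atom_def h_def I_def mult.assoc)
  also have "\<dots> = (if l = k - 1 then 2 * fact (k - 1) / real k ^ k * c else 0)"
  proof (cases "l = k - 1")
    case True
    have I0: "moment I 0 = h" using hpos by (simp add: moment_def I_def)
    obtain m where m: "k = Suc m" using assms(1) by (cases k) auto
    have sign: "(-1) ^ m * (- h) ^ m = h ^ m"
      by (simp add: power_mult_distrib[symmetric])
    have ratio: "h ^ Suc m / R ^ Suc m = 2 ^ Suc m / real (Suc m) ^ Suc m"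
      using assms(2) by (simp add: h_def m power_divide)
    have "c * (-1) ^ m / (2 ^ m * R ^ Suc m) * ((- h) ^ m * fact m * h)
        = c * fact m * ((-1) ^ m * (- h) ^ m * h) / (2 ^ m * R ^ Suc m)"
      by (simp add: mult_ac)
    also have "\<dots> = c * fact m * (h ^ Suc m / R ^ Suc m) / 2 ^ m"
      unfolding sign by (simp add: mult_ac)
    also have "\<dots> = 2 * fact m / real (Suc m) ^ Suc m * c"
      unfolding ratio by simp
    finally have "c * (-1) ^ m / (2 ^ m * R ^ Suc m) * ((- h) ^ m * fact m * h) = \<dots>" .
    then show ?thesis using True moments I0 m by (simp add: distrib_right)
  next
    case False
    then show ?thesis using assms(3) moments by simp
  qed
  finally show ?thesis .
qed

lemma schwartz_has_vector_derivative:
  assumes "schwartz \<phi>"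
  shows "(iter_vderiv \<phi> m has_vector_derivative iter_vderiv \<phi> (Suc m) x) (at x)"
  using assms unfolding schwartz_def by (simp add: vector_derivative_works[symmetric])

lemma schwartz_continuous_on: "schwartz \<phi> \<Longrightarrow> continuous_on UNIV (iter_vderiv \<phi> m)"
  by (metis continuous_at_imp_continuous_on has_vector_derivative_continuous
      schwartz_has_vector_derivative)

lemma schwartz_derivative_bounded:
  assumes "schwartz \<phi>"
  obtains M where "M > 0" "\<And>x. cmod (iter_vderiv \<phi> m x) \<le> M"
proof -
  obtain B where "\<And>x. \<bar>x\<bar> ^ 0 * cmod (iter_vderiv \<phi> m x) \<le> B"
    using assms unfolding schwartz_def by blast
  then show thesis
    by (intro that[of "max B 1"]) (auto intro: max.coboundedI1)
qed

text \<open>A vanishing derivative makes the function constant, and decay forces the constant to be 0.\<close>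
lemma schwartz_iter_vderiv_zero:
  assumes S: "schwartz \<phi>" and zero: "\<And>x. iter_vderiv \<phi> (Suc m) x = 0"
  shows "iter_vderiv \<phi> m x = 0"
proof -
  have "(iter_vderiv \<phi> m has_vector_derivative 0) (at x within UNIV)" for x
    using schwartz_has_vector_derivative[OF S, of m x] unfolding zero by simp
  then obtain c where c: "\<And>x. iter_vderiv \<phi> m x = c"
    using has_vector_derivative_zero_constant[OF convex_UNIV] by (metis UNIV_I)
  obtain B where B: "\<And>x. \<bar>x\<bar> ^ 1 * cmod (iter_vderiv \<phi> m x) \<le> B"
    using S unfolding schwartz_def by blast
  have "c = 0"
  proof (rule ccontr)
    assume "c \<noteq> 0"
    then have "\<bar>(\<bar>B\<bar> + 1) / cmod c\<bar> * cmod c = \<bar>B\<bar> + 1" by simp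
    then show False using B[of "(\<bar>B\<bar> + 1) / cmod c"] unfolding c by simp
  qed
  then show ?thesis using c by simp
qed

lemma schwartz_zero_if_iter_vderiv_zero:
  assumes S: "schwartz \<phi>" and "\<And>x. iter_vderiv \<phi> n x = 0"
  shows "\<phi> x = 0"
  using assms(2)
proof (induction n arbitrary: x)
  case 0
  then show ?case by simp
next
  case (Suc n)
  then show ?case using schwartz_iter_vderiv_zero[OF S Suc.prems] by blast
qed

lemma schwartz_iter_vderiv_nonzero:
  assumes S: "schwartz \<phi>" and nonzero: "\<phi> \<noteq> (\<lambda>x. 0)"
  obtains s where "s \<noteq> 0" "iter_vderiv \<phi> n s \<noteq> 0"
proof (rule ccontr)
  assume "\<not> thesis"
  then have off0: "\<And>s. s \<noteq> 0 \<Longrightarrow> iter_vderiv \<phi> n s = 0" using that by blast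
  have "((iter_vderiv \<phi> n) \<longlongrightarrow> 0) (at 0)"
    by (rule tendsto_eventually) (auto simp: eventually_at_filter off0)
  moreover have "((iter_vderiv \<phi> n) \<longlongrightarrow> iter_vderiv \<phi> n 0) (at 0)"
    using schwartz_continuous_on[OF S, of n] by (simp add: continuous_on_def)
  ultimately have "iter_vderiv \<phi> n 0 = 0" by (rule tendsto_unique[OF at_neq_bot, symmetric])
  with off0 have "iter_vderiv \<phi> n x = 0" for x by (cases "x = 0") auto
  then have "\<phi> = (\<lambda>x. 0)" using schwartz_zero_if_iter_vderiv_zero[OF S] by blast
  with nonzero show False ..
qed

lemma taylor_remainder_bound:
  fixes g :: "nat \<Rightarrow> real \<Rightarrow> real"
  assumes deriv: "\<And>m x. DERIV (g m) x :> g (Suc m) x" and bound: "\<And>x. \<bar>g n x\<bar> \<le> M"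
  shows "\<bar>g 0 (s + v) - (\<Sum>m<n. g m s / fact m * v ^ m)\<bar> \<le> M * \<bar>v\<bar> ^ n"
proof -
  have "\<forall>m x. DERIV (\<lambda>x. g m (x + s)) x :> g (Suc m) (x + s)"
    using deriv DERIV_shift by blast
  then obtain t where t: "g 0 (v + s) = (\<Sum>m<n. g m (0 + s) / fact m * v ^ m) + g n (t + s) / fact n * v ^ n"
    using Maclaurin_all_le[of "\<lambda>m x. g m (x + s)" "\<lambda>x. g 0 (x + s)"] by blast
  have "\<bar>g n (t + s) / fact n * v ^ n\<bar> = \<bar>g n (t + s)\<bar> / fact n * \<bar>v\<bar> ^ n"
    by (simp add: abs_mult power_abs)
  also have "\<dots> \<le> \<bar>g n (t + s)\<bar> * \<bar>v\<bar> ^ n"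
    by (intro mult_right_mono) (auto simp: divide_le_eq fact_ge_1 mult_le_cancel_left1)
  also have "\<dots> \<le> M * \<bar>v\<bar> ^ n" using bound by (intro mult_right_mono) auto
  finally show ?thesis using t by (simp add: add.commute)
qed

lemma Re_mult_le_cmod: "cmod w \<le> 1 \<Longrightarrow> \<bar>Re (w * z)\<bar> \<le> cmod z"
  by (metis abs_Re_le_cmod mult_left_le_one_le norm_ge_zero norm_mult order_trans)

lemma conv_dil_at_scaled:
  assumes "t \<noteq> 0"
  shows "conv_dil a \<phi> t (s * t) = (1 / t) * (LINT y|lborel. of_real (a y) * \<phi> (s - y / t))"
proof -
  have "(s * t - y) / t = s - y / t" for y using assms by (simp add: field_simps)
  then show ?thesis by (simp add: conv_dil_def dil_def mult.left_commute)
qed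

text \<open>Only the Taylor term of degree n - 1 survives integration against a;
  the Taylor remainder is O(t^-n) on the support of a.\<close>
lemma moment_taylor_estimate:
  fixes g :: "nat \<Rightarrow> real \<Rightarrow> real" and a :: "real \<Rightarrow> real"
  assumes deriv: "\<And>m x. DERIV (g m) x :> g (Suc m) x" and gbound: "\<And>x. \<bar>g n x\<bar> \<le> M"
    and [measurable]: "a \<in> borel_measurable borel"
    and supp: "\<And>y. a y \<noteq> 0 \<Longrightarrow> y \<in> {-R..R}" and abound: "\<And>y. \<bar>a y\<bar> \<le> K"
    and mom: "\<And>l. l < n \<Longrightarrow> moment a l = (if l = n - 1 then \<mu> else 0)"
    and "n \<ge> 1" "R \<ge> 0" "t > 0"
  shows "\<bar>(LINT y|lborel. a y * g 0 (s - y / t)) - g (n - 1) s / fact (n - 1) * (-1 / t) ^ (n - 1) * \<mu>\<bar>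
    \<le> 2 * K * M * R ^ (n + 1) / t ^ n"
proof -
  define P where "P y = (\<Sum>m<n. g m s / fact m * (-1 / t) ^ m * y ^ m)" for y
  define E where "E y = g 0 (s - y / t) - P y" for y
  have int: "integrable lborel (\<lambda>y. a y * f y)" if "continuous_on UNIV f" for f :: "real \<Rightarrow> real"
    using integrable_bounded_support_mult[OF _ supp abound that] by simp
  have cont_g0: "continuous_on UNIV (\<lambda>y. g 0 (s - y / t))"
    by (intro continuous_at_imp_continuous_on ballI isCont_o2[OF _ DERIV_isCont[OF deriv]])
      (use \<open>t > 0\<close> in \<open>auto intro!: continuous_intros\<close>)
  have cont_P: "continuous_on UNIV P" unfolding P_def by (intro continuous_intros)
  have "(LINT y|lborel. a y * P y) = (LINT y|lborel. (\<Sum>m<n. g m s / fact m * (-1 / t) ^ m * (a y * y ^ m)))"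
    by (simp add: P_def sum_distrib_left mult_ac)
  also have "\<dots> = (\<Sum>m<n. g m s / fact m * (-1 / t) ^ m * moment a m)"
    using int[OF continuous_on_power[OF continuous_on_id]]
    by (subst Bochner_Integration.integral_sum) (auto simp: moment_def)
  also have "\<dots> = (\<Sum>m<n. if m = n - 1 then g m s / fact m * (-1 / t) ^ m * \<mu> else 0)"
    using mom by (intro sum.cong) auto
  also have "\<dots> = g (n - 1) s / fact (n - 1) * (-1 / t) ^ (n - 1) * \<mu>"
    using \<open>n \<ge> 1\<close> by (simp add: sum.delta')
  finally have moment_part: "(LINT y|lborel. a y * P y) = \<dots>" .
  have remainder: "\<bar>a y * E y\<bar> \<le> K * M * (R / t) ^ n * indicator {-R..R} y" for y
  proof (cases "a y = 0")
    case False
    then have y: "\<bar>y\<bar> \<le> R" using supp[of y] by (simp add: abs_le_iff)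
    have "P y = (\<Sum>m<n. g m s / fact m * (- y / t) ^ m)"
      unfolding P_def by (intro sum.cong) (auto simp: power_mult_distrib[symmetric])
    then have "\<bar>E y\<bar> \<le> M * \<bar>- y / t\<bar> ^ n"
      using taylor_remainder_bound[OF deriv gbound, of s "- y / t"] by (simp add: E_def)
    also have "\<dots> \<le> M * (R / t) ^ n"
      using y \<open>t > 0\<close> gbound[of 0] by (intro mult_left_mono power_mono) (auto simp: divide_right_mono)
    finally have "\<bar>a y\<bar> * \<bar>E y\<bar> \<le> K * (M * (R / t) ^ n)"
      using abound[of y] by (intro mult_mono) auto
    then show ?thesis using y by (simp add: abs_mult mult.assoc abs_le_iff)
  qed (use abound[of y] gbound[of 0] \<open>t > 0\<close> in \<open>auto simp: indicator_def\<close>)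
  have "norm (LINT y|lborel. a y * E y) \<le> (LINT y|lborel. K * M * (R / t) ^ n * indicator {-R..R} y)"
  proof (rule Bochner_Integration.integral_norm_bound_integral)
    show "integrable lborel (\<lambda>y. a y * E y)"
      unfolding E_def using cont_g0 cont_P by (intro int continuous_intros)
    show "integrable lborel (\<lambda>y. K * M * (R / t) ^ n * indicator {-R..R} y)"
      by (intro integrable_mult_right integrable_real_indicator) (auto simp: emeasure_lborel_Icc_eq)
  qed (use remainder in simp)
  also have "\<dots> = 2 * K * M * R ^ (n + 1) / t ^ n"
    using \<open>R \<ge> 0\<close> by (simp add: power_divide)
  finally have "\<bar>LINT y|lborel. a y * E y\<bar> \<le> \<dots>" by simp
  moreover have "(LINT y|lborel. a y * g 0 (s - y / t)) = (LINT y|lborel. a y * P y) + (LINT y|lborel. a y * E y)"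
    using int[OF cont_P] int[OF cont_g0] by (simp add: E_def algebra_simps)
  ultimately show ?thesis using moment_part by simp
qed

lemma conv_dil_lower_bound:
  fixes a :: "real \<Rightarrow> real"
  assumes S: "schwartz \<phi>" and a: "a \<in> borel_measurable borel"
    and supp: "\<And>y. a y \<noteq> 0 \<Longrightarrow> y \<in> {-R..R}" and abound: "\<And>y. \<bar>a y\<bar> \<le> K"
    and mom: "\<And>l. l < n \<Longrightarrow> moment a l = (if l = n - 1 then \<mu> else 0)"
    and Mbound: "\<And>x. cmod (iter_vderiv \<phi> n x) \<le> M"
    and "n \<ge> 1" "R \<ge> 0" "t > 0"
  shows "(cmod (iter_vderiv \<phi> (n - 1) s) * \<bar>\<mu>\<bar> / (fact (n - 1) * t ^ (n - 1)) - 2 * K * M * R ^ (n + 1) / t ^ n) / t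
    \<le> cmod (conv_dil a \<phi> t (s * t))"
proof -
  define z where "z = iter_vderiv \<phi> (n - 1) s"
  \<comment> \<open>Rotating by w makes the leading Taylor coefficient real and equal to cmod z, so the
    real Taylor formula applies to Re (w * \<phi>).\<close>
  define w where "w = cnj z / of_real (cmod z)"
  define g where "g m x = Re (w * iter_vderiv \<phi> m x)" for m x
  have w: "cmod w \<le> 1" by (simp add: w_def norm_divide divide_le_eq_1)
  have rot: "bounded_linear (\<lambda>u. Re (w * u))"
    by (intro bounded_linear_compose[OF bounded_linear_Re] bounded_linear_mult_right)
  have deriv: "DERIV (g m) x :> g (Suc m) x" for m x
    unfolding has_real_derivative_iff_has_vector_derivative g_def
    using bounded_linear.has_vector_derivative[OF rot schwartz_has_vector_derivative[OF S]] by simp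
  have gbound: "\<bar>g n x\<bar> \<le> M" for x
    using Re_mult_le_cmod[OF w] Mbound order_trans unfolding g_def by blast
  have g_s: "g (n - 1) s = cmod z"
  proof -
    have "w * z = of_real ((cmod z)\<^sup>2) / of_real (cmod z)"
      unfolding complex_norm_square by (simp add: w_def mult.commute)
    then show ?thesis by (simp add: g_def z_def power2_eq_square)
  qed
  have re: "Re (w * conv_dil a \<phi> t (s * t)) = (LINT y|lborel. a y * g 0 (s - y / t)) / t"
  proof -
    have "continuous_on UNIV \<phi>" using schwartz_continuous_on[OF S, of 0] by simp
    then have "continuous_on UNIV (\<lambda>y. \<phi> (s - y / t))"
      by (rule continuous_on_compose2[of UNIV]) (use \<open>t > 0\<close> in \<open>auto intro!: continuous_intros\<close>)
    from integrable_bounded_support_mult[OF a supp abound this]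
    have "integrable lborel (\<lambda>y. of_real (a y) * \<phi> (s - y / t))"
      by (simp add: scaleR_conv_of_real)
    from integral_bounded_linear[OF rot this] show ?thesis
      using \<open>t > 0\<close> by (simp add: conv_dil_at_scaled g_def algebra_simps)
  qed
  have upper: "\<bar>LINT y|lborel. a y * g 0 (s - y / t)\<bar> / t \<le> cmod (conv_dil a \<phi> t (s * t))"
    using Re_mult_le_cmod[OF w, of "conv_dil a \<phi> t (s * t)"] \<open>t > 0\<close> unfolding re
    by (simp add: abs_divide)
  have lower: "cmod z * \<bar>\<mu>\<bar> / (fact (n - 1) * t ^ (n - 1)) - 2 * K * M * R ^ (n + 1) / t ^ n
      \<le> \<bar>LINT y|lborel. a y * g 0 (s - y / t)\<bar>"
  proof -
    have main: "\<bar>g (n - 1) s / fact (n - 1) * (-1 / t) ^ (n - 1) * \<mu>\<bar> = cmod z * \<bar>\<mu>\<bar> / (fact (n - 1) * t ^ (n - 1))"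
      unfolding g_s using \<open>t > 0\<close> by (simp add: abs_mult power_abs power_one_over)
    have est: "\<bar>(LINT y|lborel. a y * g 0 (s - y / t)) - g (n - 1) s / fact (n - 1) * (-1 / t) ^ (n - 1) * \<mu>\<bar>
        \<le> 2 * K * M * R ^ (n + 1) / t ^ n"
      by (rule moment_taylor_estimate[OF deriv gbound a supp abound mom assms(7-9)])
    have tri: "\<bar>m\<bar> - Q \<le> \<bar>L\<bar>" if "\<bar>L - m\<bar> \<le> Q" for L m Q :: real
      using that abs_triangle_ineq2[of m L] abs_minus_commute[of m L] by linarith
    show ?thesis using tri[OF est] unfolding main .
  qed
  show ?thesis
    using order_trans[OF divide_right_mono[OF lower] upper] \<open>t > 0\<close> by (simp add: z_def)
qed

lemma ennreal_powr_le_enn_powr: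
  assumes "ennreal r \<le> y" "0 \<le> r" "0 < q"
  shows "ennreal (r powr q) \<le> enn_powr y q"
proof (cases "y = top")
  case False
  then have "r \<le> enn2real y"
    using assms enn2real_mono[of "ennreal r" y] by (simp add: top.not_eq_extremum)
  then show ?thesis using False assms by (simp add: enn_powr_def powr_mono2)
qed (simp add: enn_powr_def)

lemma ennreal_le_one_plus_enn_powr:
  assumes "ennreal J \<le> X" "0 \<le> J" "1 \<le> q"
  shows "ennreal J \<le> 1 + enn_powr X q"
proof (cases "X = top")
  case False
  define x where "x = enn2real X"
  have "J \<le> x"
    using assms False enn2real_mono[of "ennreal J" X] by (simp add: x_def top.not_eq_extremum)
  moreover have "x \<le> 1 + x powr q"
  proof (cases "x \<ge> 1")
    case True
    then have "x powr 1 \<le> x powr q" using assms by (intro powr_mono) auto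
    with True show ?thesis by simp
  qed (use powr_ge_zero[of x q] in linarith)
  ultimately have "ennreal J \<le> ennreal (1 + x powr q)"
    by (intro ennreal_leI) linarith
  then show ?thesis using False by (simp add: enn_powr_def x_def ennreal_plus)
qed (simp add: enn_powr_def)

lemma nn_integral_reciprocal_dilated:
  fixes s D T0 T1 :: real
  assumes "0 < T0" "T0 \<le> T1" "s \<noteq> 0" "D \<ge> 0"
  shows "(\<integral>\<^sup>+ x. ennreal (indicator {T0..T1} (x / s) * (D / (x / s))) \<partial>lborel)
    = ennreal (\<bar>s\<bar> * (D * (ln T1 - ln T0)))"
proof -
  have "((\<lambda>y. D / y) has_integral (D * ln T1 - D * ln T0)) {T0..T1}"
  proof (rule fundamental_theorem_of_calculus)
    fix x assume "x \<in> {T0..T1}"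
    then have "((\<lambda>y. D * ln y) has_real_derivative D * (1 / x)) (at x)"
      using assms by (auto intro!: derivative_eq_intros)
    then show "((\<lambda>y. D * ln y) has_vector_derivative D / x) (at x within {T0..T1})"
      by (simp add: has_real_derivative_iff_has_vector_derivative[symmetric] has_field_derivative_at_within)
  qed fact
  then have "(\<integral>\<^sup>+ y. ennreal (indicator {T0..T1} y * (D / y)) \<partial>lborel) = ennreal (D * (ln T1 - ln T0))"
    using assms by (intro nn_integral_has_integral_lebesgue) (auto simp: algebra_simps)
  moreover have "(\<integral>\<^sup>+ x. ennreal (indicator {T0..T1} (x / s) * (D / (x / s))) \<partial>lborel)
      = \<bar>s\<bar> * (\<integral>\<^sup>+ y. ennreal (indicator {T0..T1} y * (D / y)) \<partial>lborel)"
    using nn_integral_real_affine[of "\<lambda>x. ennreal (indicator {T0..T1} (x / s) * (D / (x / s)))" s 0] assms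
    by simp
  moreover have "0 \<le> D * (ln T1 - ln T0)" using assms by simp
  ultimately show ?thesis by (simp add: ennreal_mult)
qed

lemma nn_integral_powr_lower_log:
  fixes F :: "real \<Rightarrow> ennreal"
  assumes "k \<ge> 1" "s \<noteq> 0" "0 < T0" "T0 \<le> 1 / 2" "B \<ge> 0"
    and lower: "\<And>t. t \<in> {T0..1 / 2} \<Longrightarrow> ennreal (B / t ^ k) \<le> F (s * t)"
  shows "ennreal (\<bar>s\<bar> * (B powr (1 / k) * (ln (1 / 2) - ln T0))) \<le> (\<integral>\<^sup>+ x. enn_powr (F x) (1 / k) \<partial>lborel)"
proof -
  have "ennreal (indicator {T0..1 / 2} (x / s) * (B powr (1 / k) / (x / s))) \<le> enn_powr (F x) (1 / k)" for x
  proof (cases "x / s \<in> {T0..1 / 2}")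
    case True
    define t where "t = x / s"
    have t: "t \<in> {T0..1 / 2}" "t > 0" using True assms unfolding t_def by auto
    have "(B / t ^ k) powr (1 / k) = B powr (1 / k) / t"
      using t assms by (simp add: powr_divide powr_realpow[symmetric] powr_powr)
    moreover have "ennreal ((B / t ^ k) powr (1 / k)) \<le> enn_powr (F x) (1 / k)"
      using lower[OF t(1)] t assms by (intro ennreal_powr_le_enn_powr) (auto simp: t_def)
    ultimately show ?thesis using True by (simp add: t_def)
  qed simp
  then have "(\<integral>\<^sup>+ x. ennreal (indicator {T0..1 / 2} (x / s) * (B powr (1 / k) / (x / s))) \<partial>lborel)
      \<le> (\<integral>\<^sup>+ x. enn_powr (F x) (1 / k) \<partial>lborel)"
    by (intro nn_integral_mono)
  then show ?thesis using nn_integral_reciprocal_dilated[of T0 "1 / 2" s "B powr (1 / k)"] assms by simp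
qed

lemma ln_le_hp_norm:
  assumes "k \<ge> 1" "s \<noteq> 0" "T0 > 0" "B > 0" "0 < c" "c \<le> 1"
    and lower: "\<And>t. t \<in> {T0..1 / 2} \<Longrightarrow> ennreal (B * c / t ^ k) \<le> loc_max \<phi> f (s * t)"
  shows "ennreal (c * (ln (1 / 2) - ln T0))
    \<le> ennreal (1 / (\<bar>s\<bar> * B powr (1 / k))) * (1 + hp_norm \<phi> (1 / k) f)"
proof (cases "T0 \<le> 1 / 2")
  case False
  then have "c * (ln (1 / 2) - ln T0) \<le> 0"
    using assms by (intro mult_nonneg_nonpos) auto
  then show ?thesis by (simp add: ennreal_neg)
next
  case True
  define \<alpha> where "\<alpha> = \<bar>s\<bar> * B powr (1 / k)"
  define Y where "Y = ln (1 / 2) - ln T0"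
  have "\<alpha> > 0" "Y \<ge> 0" using assms True by (auto simp: \<alpha>_def Y_def)
  have "B powr (1 / k) * c \<le> B powr (1 / k) * c powr (1 / k)"
    using assms powr_mono'[of "1 / k" 1 c] by (intro mult_left_mono) auto
  then have "\<alpha> * (c * Y) \<le> \<bar>s\<bar> * ((B * c) powr (1 / k) * Y)"
    using \<open>Y \<ge> 0\<close> assms
    by (simp add: \<alpha>_def powr_mult mult_right_mono mult_left_mono mult.assoc[symmetric])
  also have "ennreal (\<bar>s\<bar> * ((B * c) powr (1 / k) * Y)) \<le> (\<integral>\<^sup>+ x. enn_powr (loc_max \<phi> f x) (1 / k) \<partial>lborel)"
    unfolding Y_def using assms True lower by (intro nn_integral_powr_lower_log) auto
  finally have "ennreal (\<alpha> * (c * Y)) \<le> 1 + hp_norm \<phi> (1 / k) f"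
    unfolding hp_norm_def using \<open>\<alpha> > 0\<close> \<open>Y \<ge> 0\<close> assms
    by (intro ennreal_le_one_plus_enn_powr) (auto intro!: ennreal_leI)
  then have "ennreal (1 / \<alpha>) * ennreal (\<alpha> * (c * Y)) \<le> ennreal (1 / \<alpha>) * (1 + hp_norm \<phi> (1 / k) f)"
    by (rule mult_left_mono) simp
  moreover have "ennreal (1 / \<alpha>) * ennreal (\<alpha> * (c * Y)) = ennreal (c * Y)"
    using \<open>\<alpha> > 0\<close> \<open>Y \<ge> 0\<close> assms by (simp add: ennreal_mult[symmetric])
  ultimately show ?thesis by (simp add: \<alpha>_def Y_def)
qed

lemma mult_abs_ln_le:
  fixes c r \<kappa> :: real
  assumes "0 < c" "c \<le> 1" "0 < r" "r < 1" "\<kappa> > 0"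
  shows "c * \<bar>ln r\<bar> \<le> c * (ln (1 / 2) - ln (\<kappa> * r / c)) + (1 + \<bar>ln 2 + ln \<kappa>\<bar>)"
proof -
  have "- (c * ln c) \<le> 1"
  proof -
    have "- ln c \<le> 1 / c - 1" using ln_le_minus_one[of "1 / c"] assms by (simp add: ln_div)
    then have "c * (- ln c) \<le> c * (1 / c - 1)" using assms by (intro mult_left_mono) auto
    also have "\<dots> = 1 - c" using assms by (simp add: field_simps)
    finally show ?thesis using assms by simp
  qed
  moreover have "c * (ln 2 + ln \<kappa>) \<le> \<bar>ln 2 + ln \<kappa>\<bar>"
    using assms mult_left_le_one_le[of "\<bar>ln 2 + ln \<kappa>\<bar>" c] abs_ge_self[of "ln 2 + ln \<kappa>"]
    by (smt (verit) mult_left_mono)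
  moreover have "ln (\<kappa> * r / c) = ln \<kappa> + ln r - ln c" using assms by (simp add: ln_mult ln_div)
  ultimately show ?thesis using assms by (simp add: ln_div algebra_simps)
qed

lemma loc_max_diff_atom_lower:
  fixes k :: nat and \<phi> :: "real \<Rightarrow> complex" and s :: real
  defines "A \<equiv> 2 * cmod (iter_vderiv \<phi> (k - 1) s) / real k ^ k"
  assumes "k \<ge> 1" "schwartz \<phi>" "R > 0" "0 < c" "c \<le> 1"
    and Mbound: "\<And>x. cmod (iter_vderiv \<phi> k x) \<le> M"
    and "0 < t" "t < 1" "4 * M * R \<le> A * c * t"
  shows "ennreal (A / 2 * c / t ^ k) \<le> loc_max \<phi> (diff_atom k R c) (s * t)"
proof -
  define u where "u = t ^ (k - 1)"
  have u: "u > 0" "t ^ k = t * u"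
    using assms by (auto simp: u_def power_Suc[symmetric] simp del: power_Suc)
  have "A / 2 * c / t ^ k \<le> (A * c / u - 2 * M * R / t ^ k) / t"
  proof -
    have "(A * c / u - 2 * M * R / (t * u)) / t - A / 2 * c / (t * u) = (A * c * t - 4 * M * R) / (2 * t * t * u)"
      using u \<open>t > 0\<close> by (simp add: field_simps)
    moreover have "(A * c * t - 4 * M * R) / (2 * t * t * u) \<ge> 0"
      using u assms by simp
    ultimately show ?thesis unfolding u(2) by linarith
  qed
  also have "(A * c / u - 2 * M * R / t ^ k) / t
      = (cmod (iter_vderiv \<phi> (k - 1) s) * \<bar>2 * fact (k - 1) / real k ^ k * c\<bar> / (fact (k - 1) * t ^ (k - 1))
         - 2 * (1 / R ^ k) * M * R ^ (k + 1) / t ^ k) / t"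
    using assms by (simp add: A_def u_def field_simps)
  also have "\<dots> \<le> cmod (conv_dil (diff_atom k R c) \<phi> t (s * t))"
    using assms diff_atom_support[of k R c] diff_atom_bound[of R c k] moment_diff_atom[of k R]
    by (intro conv_dil_lower_bound) auto
  finally have "ennreal (A / 2 * c / t ^ k) \<le> ennreal (cmod (conv_dil (diff_atom k R c) \<phi> t (s * t)))"
    by (rule ennreal_leI)
  also have "\<dots> \<le> loc_max \<phi> (diff_atom k R c) (s * t)"
    unfolding loc_max_def using assms by (intro SUP_upper) auto
  finally show ?thesis .
qed

lemma ennreal_le_plus:
  assumes "x \<le> y + z" "0 \<le> z"
  shows "ennreal x \<le> ennreal y + ennreal z"
proof (cases "y \<ge> 0")
  case True
  then show ?thesis using assms by (simp add: ennreal_plus[symmetric] ennreal_leI del: ennreal_plus)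
next
  case False
  then have "ennreal x \<le> ennreal z" using assms by (intro ennreal_leI) simp
  then show ?thesis by (simp add: add_increasing)
qed

lemma diff_atom_log_estimate:
  fixes k :: nat and \<phi> :: "real \<Rightarrow> complex" and s M :: real
  defines "A \<equiv> 2 * cmod (iter_vderiv \<phi> (k - 1) s) / real k ^ k"
  defines "\<kappa> \<equiv> 4 * M * 2 ^ (k - 2) / A"
  assumes k: "k \<ge> 1" and S: "schwartz \<phi>" and s: "s \<noteq> 0" "iter_vderiv \<phi> (k - 1) s \<noteq> 0"
    and M: "M > 0" "\<And>x. cmod (iter_vderiv \<phi> k x) \<le> M"
    and r: "0 < r" "r < 1" and c: "0 < c" "c \<le> 1"
  shows "ennreal (c * \<bar>ln r\<bar>) \<le> ennreal (1 / (\<bar>s\<bar> * (A / 2) powr (1 / k)) + (1 + \<bar>ln 2 + ln \<kappa>\<bar>))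
    * (1 + hp_norm \<phi> (1 / k) (diff_atom k (2 ^ (k - 2) * r) c))"
proof -
  define R where "R = 2 ^ (k - 2) * r"
  define H where "H = hp_norm \<phi> (1 / k) (diff_atom k R c)"
  define \<beta> where "\<beta> = 1 + \<bar>ln 2 + ln \<kappa>\<bar>"
  have "A > 0" "\<kappa> > 0" "R > 0" using k s M r by (simp_all add: A_def \<kappa>_def R_def)
  have T0: "\<kappa> * r / c = 4 * M * R / (A * c)" by (simp add: \<kappa>_def R_def)
  have "ennreal (c * (ln (1 / 2) - ln (\<kappa> * r / c))) \<le> ennreal (1 / (\<bar>s\<bar> * (A / 2) powr (1 / k))) * (1 + H)"
    unfolding H_def
  proof (rule ln_le_hp_norm)
    fix t assume t: "t \<in> {\<kappa> * r / c..1 / 2}"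
    have "0 < \<kappa> * r / c" using \<open>\<kappa> > 0\<close> r c by simp
    then have "0 < t" "t < 1" using t by auto
    have "4 * M * R / (A * c) \<le> t" using t by (simp add: T0)
    then have "4 * M * R \<le> A * c * t" using \<open>A > 0\<close> c by (simp add: pos_divide_le_eq mult_ac)
    from loc_max_diff_atom_lower[OF k S \<open>R > 0\<close> c M(2) \<open>0 < t\<close> \<open>t < 1\<close> this[unfolded A_def]]
    show "ennreal (A / 2 * c / t ^ k) \<le> loc_max \<phi> (diff_atom k R c) (s * t)"
      unfolding A_def .
  qed (use k s c \<open>A > 0\<close> \<open>\<kappa> > 0\<close> r in auto)
  moreover have "ennreal (c * \<bar>ln r\<bar>) \<le> ennreal (c * (ln (1 / 2) - ln (\<kappa> * r / c))) + ennreal \<beta>"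
  proof -
    have "c * \<bar>ln r\<bar> \<le> c * (ln (1 / 2) - ln (\<kappa> * r / c)) + \<beta>"
      unfolding \<beta>_def using c r \<open>\<kappa> > 0\<close> by (rule mult_abs_ln_le)
    then show ?thesis by (rule ennreal_le_plus) (simp add: \<beta>_def)
  qed
  moreover have "ennreal \<beta> \<le> ennreal \<beta> * (1 + H)"
    using mult_left_mono[of 1 "1 + H" "ennreal \<beta>"] by simp
  ultimately have "ennreal (c * \<bar>ln r\<bar>) \<le> ennreal (1 / (\<bar>s\<bar> * (A / 2) powr (1 / k))) * (1 + H) + ennreal \<beta> * (1 + H)"
    by (meson add_mono order_trans)
  also have "\<dots> = ennreal (1 / (\<bar>s\<bar> * (A / 2) powr (1 / k)) + \<beta>) * (1 + H)"
    using \<open>A > 0\<close> by (simp add: \<beta>_def ennreal_plus[symmetric] distrib_right)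
  finally show ?thesis by (simp add: H_def R_def \<beta>_def)
qed

lemma diff_atom_properties:
  assumes "k \<ge> 2" "R > 0" "0 \<le> c" "c \<le> 1"
  shows "diff_atom k R c \<in> borel_measurable lborel"
    and "\<forall>t. diff_atom k R c t \<noteq> 0 \<longrightarrow> \<bar>t\<bar> \<le> R"
    and "AE t in lborel. \<bar>diff_atom k R c t\<bar> \<le> R powr (- real k)"
    and "\<forall>l \<le> k - 2. (LINT t|lborel. diff_atom k R c t * t ^ l) = 0"
    and "(LINT t|lborel. diff_atom k R c t * t ^ (k - 1)) = 2 * fact (k - 1) / real k ^ k * c"
proof -
  have k: "k \<ge> 1" using assms(1) by simp
  show "diff_atom k R c \<in> borel_measurable lborel" by (simp add: measurable_lborel1)
  show "\<forall>t. diff_atom k R c t \<noteq> 0 \<longrightarrow> \<bar>t\<bar> \<le> R"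
    using diff_atom_support[OF k \<open>R > 0\<close>, of c] by (fastforce simp: abs_le_iff)
  show "AE t in lborel. \<bar>diff_atom k R c t\<bar> \<le> R powr (- real k)"
    using diff_atom_bound[OF assms(2-4)] \<open>R > 0\<close> by (simp add: powr_minus powr_realpow divide_inverse)
  show "\<forall>l \<le> k - 2. (LINT t|lborel. diff_atom k R c t * t ^ l) = 0"
    using moment_diff_atom[OF k \<open>R > 0\<close>] assms(1) by (auto simp: moment_def)
  show "(LINT t|lborel. diff_atom k R c t * t ^ (k - 1)) = 2 * fact (k - 1) / real k ^ k * c"
    using moment_diff_atom[OF k \<open>R > 0\<close>, of "k - 1" c] k by (simp add: moment_def)
qed

theorem mainTheorem2:
  fixes k :: nat and \<phi> :: "real \<Rightarrow> complex"
  assumes "k \<ge> 2"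
    and "schwartz \<phi>"
    and "integral\<^sup>L lborel \<phi> \<noteq> 0"
  shows "\<exists>Ck Ck'. Ck > 0 \<and> Ck' > 0 \<and>
    (\<forall>r c. 0 < r \<and> r < 2 powr (1 - real k) \<and> 0 \<le> c \<and> c \<le> 1 \<longrightarrow>
      (\<exists>a :: real \<Rightarrow> real. a \<in> borel_measurable lborel \<and>
         (\<forall>t. a t \<noteq> 0 \<longrightarrow> \<bar>t\<bar> \<le> 2 ^ (k - 2) * r) \<and>
         (AE t in lborel. \<bar>a t\<bar> \<le> (2 ^ (k - 2) * r) powr (- real k)) \<and>
         (\<forall>l \<le> k - 2. (LINT t|lborel. a t * t ^ l) = 0) \<and>
         (LINT t|lborel. a t * t ^ (k - 1)) = Ck * c \<and>
         ennreal (c * \<bar>ln r\<bar>) \<le> ennreal Ck' * (1 + hp_norm \<phi> (1 / real k) a)))"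
proof -
  have k: "k \<ge> 1" using assms(1) by simp
  have "\<phi> \<noteq> (\<lambda>x. 0)" using assms(3) by auto
  then obtain s where s: "s \<noteq> 0" "iter_vderiv \<phi> (k - 1) s \<noteq> 0"
    using schwartz_iter_vderiv_nonzero[OF assms(2)] by blast
  obtain M where M: "M > 0" "\<And>x. cmod (iter_vderiv \<phi> k x) \<le> M"
    using schwartz_derivative_bounded[OF assms(2)] by blast
  define A where "A = 2 * cmod (iter_vderiv \<phi> (k - 1) s) / real k ^ k"
  define Ck' where "Ck' = 1 / (\<bar>s\<bar> * (A / 2) powr (1 / k)) + (1 + \<bar>ln 2 + ln (4 * M * 2 ^ (k - 2) / A)\<bar>)"
  have "Ck' > 0" unfolding Ck'_def by (rule add_nonneg_pos) (use s k in \<open>auto simp: A_def\<close>)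
  have log_estimate: "ennreal (c * \<bar>ln r\<bar>) \<le> ennreal Ck' * (1 + hp_norm \<phi> (1 / k) (diff_atom k (2 ^ (k - 2) * r) c))"
    if "0 < r" "r < 2 powr (1 - real k)" "0 \<le> c" "c \<le> 1" for r c
  proof (cases "c = 0")
    case False
    have "r < 1" using that assms(1) powr_less_mono[of "1 - real k" 0 2] by simp
    with False that show ?thesis
      using diff_atom_log_estimate[OF k assms(2) s M \<open>0 < r\<close>, of c] by (simp add: Ck'_def A_def)
  qed simp
  show ?thesis
    apply (rule exI[of _ "2 * fact (k - 1) / real k ^ k"], rule exI[of _ Ck'], intro conjI allI impI)
    subgoal using k by simp
    subgoal by fact
    subgoal for r c
      using diff_atom_properties[OF assms(1), of "2 ^ (k - 2) * r" c] log_estimate[of r c]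
      by (intro exI[of _ "diff_atom k (2 ^ (k - 2) * r) c"]) auto
    done
qed

end
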